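(* Let $\mathcal{B}$ be a $\sigma$-algebra on a nonempty set $E$. Every optimal measure on $\mathcal{B}$ is essential, and hence $\sigma$-principal, CCC and autocontinuous.
   Context: An optimal measure is a map $\nu:\mathcal{B}\to[0,\infty]$ with $\nu(\emptyset)=0$, $\nu(B\cup B')=\max(\nu(B),\nu(B'))$, continuous from below ($\nu(\bigcup_nB_n)=\lim_n\nu(B_n)$ for nondecreasing sequences in $\mathcal{B}$) and from above ($\nu(\bigcap_nB_n)=\lim_n\nu(B_n)$ for nonincreasing sequences in $\mathcal{B}$). $\nu$ is essential if there is a $\sigma$-finite $\sigma$-additive measure $m$ on $\mathcal{B}$ with $\nu(B)>0\iff m(B)>0$ for all $B\in\mathcal{B}$. A set $N\subset E$ is $\nu$-negligible if $N\subset G$ for some $G\in\mathcal{B}$ with $\nu(G)=0$. A $\sigma$-ideal of $\mathcal{B}$ is a nonempty $\mathcal{I}\subset\mathcal{B}$ closed under countable unions and under taking subsets belonging to $\mathcal{B}$; $\nu$ is $\sigma$-principal if for each $\sigma$-ideal $\mathcal{I}$ there is $L\in\mathcal{I}$ with $S\setminus L$ $\nu$-negligible for all $S\in\mathcal{I}$. $\nu$ is CCC if every family of pairwise disjoint non-$\nu$-negligible elements of $\mathcal{B}$ is countable. $\nu$ is autocontinuous if there is $f:E\to[0,\infty]$ with $\{f>t\}\in\mathcal{B}$ for all $t\ge0$ and $\nu(B)=\inf\{t>0:B\cap\{f>t\}\text{ is }\nu\text{-negligible}\}$ for all $B\in\mathcal{B}$. *)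

theory Defs
  imports "HOL-Analysis.Analysis"
begin

definition optimal_measure :: "'a set \<Rightarrow> 'a set set \<Rightarrow> ('a set \<Rightarrow> ennreal) \<Rightarrow> bool" where
  "optimal_measure E B \<nu> \<longleftrightarrow>
     \<nu> {} = 0 \<and>
     (\<forall>A\<in>B. \<forall>A'\<in>B. \<nu> (A \<union> A') = max (\<nu> A) (\<nu> A')) \<and>
     (\<forall>Bs::nat \<Rightarrow> 'a set. range Bs \<subseteq> B \<and> incseq Bs \<longrightarrow>
        (\<lambda>n. \<nu> (Bs n)) \<longlonglongrightarrow> \<nu> (\<Union>n. Bs n)) \<and>
     (\<forall>Bs::nat \<Rightarrow> 'a set. range Bs \<subseteq> B \<and> decseq Bs \<longrightarrow>
        (\<lambda>n. \<nu> (Bs n)) \<longlonglongrightarrow> \<nu> (\<Inter>n. Bs n))"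

definition essential :: "'a set \<Rightarrow> 'a set set \<Rightarrow> ('a set \<Rightarrow> ennreal) \<Rightarrow> bool" where
  "essential E B \<nu> \<longleftrightarrow>
     (\<exists>m::'a measure. space m = E \<and> sets m = B \<and> sigma_finite_measure m \<and>
        (\<forall>A\<in>B. \<nu> A > 0 \<longleftrightarrow> emeasure m A > 0))"

definition negligible :: "'a set set \<Rightarrow> ('a set \<Rightarrow> ennreal) \<Rightarrow> 'a set \<Rightarrow> bool" where
  "negligible B \<nu> N \<longleftrightarrow> (\<exists>G\<in>B. N \<subseteq> G \<and> \<nu> G = 0)"

definition sigma_ideal :: "'a set set \<Rightarrow> 'a set set \<Rightarrow> bool" where
  "sigma_ideal B I \<longleftrightarrow> I \<noteq> {} \<and> I \<subseteq> B \<and>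
     (\<forall>F::nat \<Rightarrow> 'a set. range F \<subseteq> I \<longrightarrow> (\<Union>n. F n) \<in> I) \<and>
     (\<forall>S\<in>I. \<forall>T\<in>B. T \<subseteq> S \<longrightarrow> T \<in> I)"

definition sigma_principal :: "'a set set \<Rightarrow> ('a set \<Rightarrow> ennreal) \<Rightarrow> bool" where
  "sigma_principal B \<nu> \<longleftrightarrow>
     (\<forall>I. sigma_ideal B I \<longrightarrow> (\<exists>L\<in>I. \<forall>S\<in>I. negligible B \<nu> (S - L)))"

definition CCC :: "'a set set \<Rightarrow> ('a set \<Rightarrow> ennreal) \<Rightarrow> bool" where
  "CCC B \<nu> \<longleftrightarrow>
     (\<forall>F. F \<subseteq> B \<and> disjoint F \<and> (\<forall>A\<in>F. \<not> negligible B \<nu> A) \<longrightarrow> countable F)"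

definition autocontinuous :: "'a set \<Rightarrow> 'a set set \<Rightarrow> ('a set \<Rightarrow> ennreal) \<Rightarrow> bool" where
  "autocontinuous E B \<nu> \<longleftrightarrow>
     (\<exists>f::'a \<Rightarrow> ennreal. (\<forall>t. {x\<in>E. f x > t} \<in> B) \<and>
        (\<forall>A\<in>B. \<nu> A = Inf {t. t > 0 \<and> negligible B \<nu> (A \<inter> {x\<in>E. f x > t})}))"

end

theory Submission
  imports Defs
begin

(*
  For \<epsilon> > 0 call A an \<epsilon>-atom if \<nu> A > \<epsilon> and A cannot be cut by a measurable set into two
  parts both of value above \<epsilon>. Continuity from above makes \<nu> (D n) tend to 0 along every
  disjoint sequence D. Hence every set of value above \<epsilon> contains an \<epsilon>-atom (otherwise
  repeated splitting yields disjoint pieces of value above \<epsilon>), and there are only finitely many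
  \<epsilon>-atoms up to the relation \<nu> (A \<inter> A') > \<epsilon>. Each \<epsilon>-atom A yields the {0,1}-valued measure
  C \<mapsto> [\<nu> (A \<inter> C) > \<epsilon>]; for rational \<epsilon> > 0 these are countably many and together they detect
  exactly the sets of positive \<nu>-value. A weighted sum of them is a finite measure with the null
  sets of \<nu>, and the same countable family gives \<sigma>-principality and CCC directly.

  Autocontinuity follows from \<sigma>-principality: if L q is a largest set, up to null sets, of the
  \<sigma>-ideal {\<nu> \<le> q}, then G q = E - L q satisfies \<nu> (C \<inter> G q) = 0 \<longleftrightarrow> \<nu> C \<le> q, and
  f = sup {q \<in> \<rat> | x \<in> G q} is the required density.
*)

lemma Inf_positive_upper_bounds:
  fixes x :: ennreal
  shows "Inf {t. 0 < t \<and> x \<le> t} = x"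
proof (rule antisym)
  show "x \<le> Inf {t. 0 < t \<and> x \<le> t}"
    by (rule Inf_greatest) simp
  show "Inf {t. 0 < t \<and> x \<le> t} \<le> x"
  proof (rule dense_ge)
    fix y assume "x < y"
    then have "0 < y" "x \<le> y"
      using le_less_trans[OF zero_le] less_imp_le by blast+
    then show "Inf {t. 0 < t \<and> x \<le> t} \<le> y"
      by (intro Inf_lower) simp
  qed
qed

lemma ennreal_le_iff_rat_upper_bounds:
  fixes x t :: ennreal
  shows "x \<le> t \<longleftrightarrow> (\<forall>r::rat. t < ennreal (of_rat r) \<longrightarrow> x \<le> ennreal (of_rat r))"
proof (intro iffI allI impI)
  show "x \<le> ennreal (of_rat r)" if "x \<le> t" "t < ennreal (of_rat r)" for r
    using that by (simp add: order.strict_implies_order order.trans)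
  assume bounds: "\<forall>r::rat. t < ennreal (of_rat r) \<longrightarrow> x \<le> ennreal (of_rat r)"
  show "x \<le> t"
  proof (rule ccontr)
    assume "\<not> x \<le> t"
    then obtain r :: rat where "t < ennreal (of_rat r)" "ennreal (of_rat r) < x"
      using ennreal_rat_dense[of t x] by (auto simp: not_le)
    then show False using bounds leD by blast
  qed
qed

(* On B, p picks out the sets of measure 1 of a {0,1}-valued measure (possibly the zero measure). *)
locale two_valued =
  fixes B :: "'a set set" and p :: "'a set \<Rightarrow> bool"
  assumes not_empty: "\<not> p {}"
    and mono: "D \<in> B \<Longrightarrow> C \<subseteq> D \<Longrightarrow> p C \<Longrightarrow> p D"
    and disjoint: "C \<inter> D = {} \<Longrightarrow> p C \<Longrightarrow> \<not> p D"
    and UN_prime: "range (Cs :: nat \<Rightarrow> 'a set) \<subseteq> B \<Longrightarrow> p (\<Union>n. Cs n) \<Longrightarrow> \<exists>n. p (Cs n)"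
begin

lemma countably_additive: "countably_additive B (\<lambda>C. if p C then 1 else 0 :: ennreal)"
  unfolding countably_additive_def
proof (intro allI impI)
  fix Cs :: "nat \<Rightarrow> 'a set"
  assume Cs: "range Cs \<subseteq> B" "disjoint_family Cs" "\<Union> (range Cs) \<in> B"
  show "(\<Sum>i. if p (Cs i) then 1 else 0 :: ennreal) = (if p (\<Union> (range Cs)) then 1 else 0)"
  proof (cases "p (\<Union> (range Cs))")
    case True
    then obtain k where k: "p (Cs k)" using UN_prime Cs(1) by blast
    have "\<not> p (Cs i)" if "i \<noteq> k" for i
      using disjoint[OF _ k] Cs(2) that by (auto simp: disjoint_family_on_def)
    then have "(\<lambda>i. if p (Cs i) then 1 else 0 :: ennreal) = (\<lambda>i. if i = k then 1 else 0)"
      using k by auto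
    then show ?thesis
      using True sums_single[of k "\<lambda>_. 1 :: ennreal"] by (simp add: sums_iff)
  next
    case False
    then have "\<not> p (Cs i)" for i
      using mono[OF Cs(3)] by blast
    then show ?thesis using False by simp
  qed
qed

end

lemma countably_additive_suminf:
  fixes \<mu> :: "nat \<Rightarrow> 'a set \<Rightarrow> ennreal"
  assumes "\<And>n. countably_additive B (\<mu> n)"
  shows "countably_additive B (\<lambda>C. \<Sum>n. \<mu> n C)"
  unfolding countably_additive_def
proof (intro allI impI)
  fix Cs :: "nat \<Rightarrow> 'a set"
  assume Cs: "range Cs \<subseteq> B" "disjoint_family Cs" "\<Union> (range Cs) \<in> B"
  have "(\<Sum>i. \<Sum>n. \<mu> n (Cs i)) = (\<Sum>i. \<integral>\<^sup>+n. \<mu> n (Cs i) \<partial>count_space UNIV)"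
    by (simp add: nn_integral_count_space_nat)
  also have "\<dots> = (\<integral>\<^sup>+n. (\<Sum>i. \<mu> n (Cs i)) \<partial>count_space UNIV)"
    by (rule nn_integral_suminf[symmetric]) simp
  also have "\<dots> = (\<Sum>n. \<mu> n (\<Union> (range Cs)))"
    using assms Cs by (simp add: nn_integral_count_space_nat countably_additive_def)
  finally show "(\<Sum>i. \<Sum>n. \<mu> n (Cs i)) = (\<Sum>n. \<mu> n (\<Union> (range Cs)))" .
qed

locale two_valued_detection = sigma_algebra E B for E :: "'a set" and B +
  fixes \<nu> :: "'a set \<Rightarrow> ennreal" and P :: "nat \<Rightarrow> 'a set \<Rightarrow> bool"
  assumes two_valued: "two_valued B (P n)"
    and positive_iff: "C \<in> B \<Longrightarrow> 0 < \<nu> C \<longleftrightarrow> (\<exists>n. P n C)"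
begin

lemma essential: "essential E B \<nu>"
proof -
  define m where "m C = (\<Sum>n. ennreal ((1/2)^n) * (if P n C then 1 else 0))" for C
  define M where "M = measure_of E B m"
  have "countably_additive B m"
    unfolding m_def using two_valued.countably_additive[OF two_valued]
    by (intro countably_additive_suminf) (simp add: countably_additive_def)
  moreover have "positive B m"
    using two_valued.not_empty[OF two_valued] by (simp add: positive_def m_def)
  ultimately have emeasure_M: "emeasure M C = m C" if "C \<in> B" for C
    unfolding M_def using emeasure_measure_of_sigma sigma_algebra_axioms that by blast
  have space_M: "space M = E" and sets_M: "sets M = B"
    unfolding M_def using space_closed by (simp_all add: sigma_sets_eq)
  have "m E \<le> (\<Sum>n. ennreal ((1/2)^n))"
    unfolding m_def by (intro suminf_le summableI) simp
  moreover have "(\<Sum>n. ennreal ((1/2)^n)) \<noteq> top"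
    by (rule ennreal_suminf_neq_top) auto
  ultimately have "emeasure M (space M) \<noteq> top"
    using emeasure_M[OF top] space_M neq_top_trans by simp
  then have "finite_measure M" by (intro finite_measureI) simp
  moreover have "m C = 0 \<longleftrightarrow> (\<forall>n. \<not> P n C)" for C
    unfolding m_def by (subst suminf_eq_zero_iff[OF summableI]) simp_all
  ultimately show ?thesis
    unfolding essential_def using positive_iff emeasure_M space_M sets_M
    by (intro exI[of _ M]) (simp add: finite_measure_def zero_less_iff_neq_zero)
qed

lemma sigma_principal: "sigma_principal B \<nu>"
  unfolding sigma_principal_def
proof (intro allI impI)
  fix I assume I: "sigma_ideal B I"
  then have "{} \<in> I" by (auto simp: sigma_ideal_def)
  have "\<exists>S\<in>I. (\<exists>T\<in>I. P n T) \<longrightarrow> P n S" for n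
    using \<open>{} \<in> I\<close> by blast
  then obtain S where S: "\<And>n. S n \<in> I" "\<And>n T. T \<in> I \<Longrightarrow> P n T \<Longrightarrow> P n (S n)"
    by metis
  define L where "L = (\<Union>n. S n)"
  have "L \<in> I"
    using I S(1) unfolding sigma_ideal_def L_def by (metis image_subsetI)
  moreover have "negligible B \<nu> (T - L)" if "T \<in> I" for T
  proof -
    have "T \<in> B" "L \<in> B" using I that \<open>L \<in> I\<close> by (auto simp: sigma_ideal_def)
    then have "T - L \<in> B" by blast
    moreover have "\<not> P n (T - L)" for n
    proof
      assume n: "P n (T - L)"
      then have "P n (S n)"
        using two_valued.mono[OF two_valued \<open>T \<in> B\<close>] S(2) that by blast
      moreover have "(T - L) \<inter> S n = {}" by (auto simp: L_def)
      ultimately show False using two_valued.disjoint[OF two_valued] n by blast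
    qed
    ultimately have "\<nu> (T - L) = 0"
      using positive_iff[of "T - L"] by (simp add: zero_less_iff_neq_zero)
    then show ?thesis using \<open>T - L \<in> B\<close> unfolding negligible_def by blast
  qed
  ultimately show "\<exists>L\<in>I. \<forall>S\<in>I. negligible B \<nu> (S - L)" by blast
qed

lemma CCC: "CCC B \<nu>"
  unfolding CCC_def
proof (intro allI impI)
  fix F assume F: "F \<subseteq> B \<and> disjoint F \<and> (\<forall>A\<in>F. \<not> negligible B \<nu> A)"
  have "\<exists>n. P n A" if "A \<in> F" for A
  proof -
    have "A \<in> B" "\<not> negligible B \<nu> A" using F that by auto
    then show ?thesis using positive_iff by (auto simp: negligible_def zero_less_iff_neq_zero)
  qed
  then obtain idx where idx: "\<And>A. A \<in> F \<Longrightarrow> P (idx A) A" by metis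
  have "inj_on idx F"
  proof (rule inj_onI, rule ccontr)
    fix A A' assume "A \<in> F" "A' \<in> F" "idx A = idx A'" "A \<noteq> A'"
    then have "A \<inter> A' = {}" "P (idx A) A" "P (idx A) A'"
      using F idx[of A] idx[of A'] by (auto simp: disjoint_def)
    then show False using two_valued.disjoint[OF two_valued] by blast
  qed
  then show "countable F" by (rule countableI)
qed

end

locale optimal_measure_space = sigma_algebra E B for E :: "'a set" and B +
  fixes \<nu> :: "'a set \<Rightarrow> ennreal"
  assumes optimal: "optimal_measure E B \<nu>"
begin

lemma nu_empty: "\<nu> {} = 0"
  using optimal by (simp add: optimal_measure_def)

lemma nu_Un: "A \<in> B \<Longrightarrow> A' \<in> B \<Longrightarrow> \<nu> (A \<union> A') = max (\<nu> A) (\<nu> A')"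
  using optimal by (simp add: optimal_measure_def)

lemma nu_mono: "A \<in> B \<Longrightarrow> A' \<in> B \<Longrightarrow> A \<subseteq> A' \<Longrightarrow> \<nu> A \<le> \<nu> A'"
  using nu_Un[of A A'] by (metis max.cobounded1 sup.absorb2)

lemma nu_incseq:
  "range (A :: nat \<Rightarrow> 'a set) \<subseteq> B \<Longrightarrow> incseq A \<Longrightarrow> (\<lambda>n. \<nu> (A n)) \<longlonglongrightarrow> \<nu> (\<Union>n. A n)"
  using optimal by (simp add: optimal_measure_def)

lemma nu_decseq:
  "range (A :: nat \<Rightarrow> 'a set) \<subseteq> B \<Longrightarrow> decseq A \<Longrightarrow> (\<lambda>n. \<nu> (A n)) \<longlonglongrightarrow> \<nu> (\<Inter>n. A n)"
  using optimal by (simp add: optimal_measure_def)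

lemma nu_UN_seq:
  fixes A :: "nat \<Rightarrow> 'a set"
  assumes "range A \<subseteq> B"
  shows "\<nu> (\<Union>n. A n) = (SUP n. \<nu> (A n))"
proof (rule antisym)
  define S where "S n = (\<Union>k<n. A k)" for n
  have S_Suc: "S (Suc n) = A n \<union> S n" for n
    by (auto simp: S_def lessThan_Suc)
  have S: "S n \<in> B \<and> \<nu> (S n) \<le> (SUP n. \<nu> (A n))" for n
  proof (induction n)
    case (Suc n)
    moreover have "A n \<in> B" "\<nu> (A n) \<le> (SUP n. \<nu> (A n))"
      using assms by (auto intro: SUP_upper)
    ultimately show ?case
      using nu_Un[of "A n" "S n"] by (simp add: S_Suc Un)
  qed (simp add: S_def nu_empty)
  have "incseq S"
    by (rule incseq_SucI) (auto simp: S_Suc)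
  then have "(\<lambda>n. \<nu> (S n)) \<longlonglongrightarrow> \<nu> (\<Union>n. S n)"
    using S by (intro nu_incseq) auto
  moreover have "(\<Union>n. S n) = (\<Union>n. A n)"
    by (auto simp: S_def)
  ultimately show "\<nu> (\<Union>n. A n) \<le> (SUP n. \<nu> (A n))"
    using S LIMSEQ_le_const2[of "\<lambda>n. \<nu> (S n)"] by auto
  show "(SUP n. \<nu> (A n)) \<le> \<nu> (\<Union>n. A n)"
    using assms by (intro SUP_least nu_mono) auto
qed

lemma nu_UN:
  assumes "countable J" "\<And>i. i \<in> J \<Longrightarrow> X i \<in> B"
  shows "\<nu> (\<Union>i\<in>J. X i) = (SUP i\<in>J. \<nu> (X i))"
proof (cases "J = {}")
  case True
  then show ?thesis by (simp add: nu_empty bot_ennreal)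
next
  case False
  then have "(\<Union>i\<in>J. X i) = (\<Union>n. X (from_nat_into J n))"
    and "(SUP i\<in>J. \<nu> (X i)) = (SUP n. \<nu> (X (from_nat_into J n)))"
    using range_from_nat_into[OF False assms(1)] by (metis image_image)+
  moreover have "range (\<lambda>n. X (from_nat_into J n)) \<subseteq> B"
    using from_nat_into[OF False] assms(2) by auto
  ultimately show ?thesis
    using nu_UN_seq by simp
qed

lemma negligible_iff: "C \<in> B \<Longrightarrow> negligible B \<nu> C \<longleftrightarrow> \<nu> C = 0"
  unfolding negligible_def by (metis nu_mono order.refl le_zero_eq)

lemma disjoint_family_nu_tendsto_0:
  fixes D :: "nat \<Rightarrow> 'a set"
  assumes D: "range D \<subseteq> B" "disjoint_family D"
  shows "(\<lambda>n. \<nu> (D n)) \<longlonglongrightarrow> 0"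
proof -
  define T where "T n = (\<Union>k\<in>{n..}. D k)" for n
  have T: "range T \<subseteq> B"
    using D(1) unfolding T_def by (auto intro!: countable_UN'')
  have "(\<Inter>n. T n) = {}"
  proof (rule ccontr)
    assume "(\<Inter>n. T n) \<noteq> {}"
    then obtain x where x: "\<And>n. x \<in> T n" by blast
    then obtain k where "x \<in> D k" by (auto simp: T_def)
    moreover obtain j where "k < j" "x \<in> D j" using x[of "Suc k"] by (auto simp: T_def Suc_le_eq)
    ultimately show False using disjoint_family_onD[OF D(2), of k j] by auto
  qed
  moreover have "decseq T"
    unfolding T_def by (intro decseq_SucI UN_mono) auto
  ultimately have T_0: "(\<lambda>n. \<nu> (T n)) \<longlonglongrightarrow> 0"
    using nu_decseq[OF T] nu_empty by simp
  have "\<nu> (D n) \<le> \<nu> (T n)" for n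
    using T D(1) by (intro nu_mono) (auto simp: T_def)
  then show ?thesis
    by (intro tendsto_sandwich[OF _ _ tendsto_const T_0]) simp_all
qed

lemma disjoint_family_nu_small:
  fixes D :: "nat \<Rightarrow> 'a set"
  assumes "range D \<subseteq> B" "disjoint_family D" "0 < \<epsilon>"
  obtains n where "\<nu> (D n) < \<epsilon>"
proof -
  have "eventually (\<lambda>n. \<nu> (D n) < \<epsilon>) sequentially"
    using order_tendstoD(2)[OF disjoint_family_nu_tendsto_0[OF assms(1,2)] assms(3)] .
  then obtain N where "\<forall>n\<ge>N. \<nu> (D n) < \<epsilon>"
    unfolding eventually_sequentially by blast
  then show ?thesis using that by blast
qed

lemma almost_disjoint_nu_small:
  fixes A :: "nat \<Rightarrow> 'a set"
  assumes A: "range A \<subseteq> B" "\<And>i j. i \<noteq> j \<Longrightarrow> \<nu> (A i \<inter> A j) \<le> \<epsilon>" and "0 < \<epsilon>"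
  obtains i where "\<nu> (A i) \<le> \<epsilon>"
proof -
  define D where "D i = A i - (\<Union>j\<in>-{i}. A j)" for i
  have "range D \<subseteq> B"
    using A(1) unfolding D_def by (auto intro!: countable_UN'')
  moreover have "disjoint_family D"
    by (auto simp: disjoint_family_on_def D_def)
  ultimately obtain i where i: "\<nu> (D i) < \<epsilon>"
    using disjoint_family_nu_small \<open>0 < \<epsilon>\<close> by blast
  define W where "W = (\<Union>j\<in>-{i}. A i \<inter> A j)"
  have "W \<in> B"
    unfolding W_def using A(1) by (intro countable_UN'') auto
  have "\<nu> W = (SUP j\<in>-{i}. \<nu> (A i \<inter> A j))"
    unfolding W_def using A(1) by (intro nu_UN) auto
  also have "\<dots> \<le> \<epsilon>"
    using A(2) by (intro SUP_least) auto
  finally have "\<nu> W \<le> \<epsilon>" .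
  have "A i = D i \<union> W"
    by (auto simp: D_def W_def)
  then have "\<nu> (A i) = max (\<nu> (D i)) (\<nu> W)"
    using \<open>range D \<subseteq> B\<close> \<open>W \<in> B\<close> nu_Un[of "D i" W] by (simp only:) blast
  then have "\<nu> (A i) \<le> \<epsilon>"
    using i \<open>\<nu> W \<le> \<epsilon>\<close> by simp
  then show ?thesis by (rule that)
qed

definition atom :: "ennreal \<Rightarrow> 'a set \<Rightarrow> bool" where
  "atom \<epsilon> A \<longleftrightarrow> A \<in> B \<and> \<epsilon> < \<nu> A \<and> (\<forall>Y\<in>B. \<nu> (A \<inter> Y) \<le> \<epsilon> \<or> \<nu> (A - Y) \<le> \<epsilon>)"

lemma exists_atom:
  assumes C: "C \<in> B" "\<epsilon> < \<nu> C" and "0 < \<epsilon>"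
  shows "\<exists>A\<subseteq>C. atom \<epsilon> A"
proof (rule ccontr)
  assume no_atom: "\<not> (\<exists>A\<subseteq>C. atom \<epsilon> A)"
  have "\<exists>Y\<in>B. \<epsilon> < \<nu> (X \<inter> Y) \<and> \<epsilon> < \<nu> (X - Y)" if "X \<in> B" "X \<subseteq> C" "\<epsilon> < \<nu> X" for X
    using no_atom that unfolding atom_def by (auto simp: not_le)
  then obtain split where split: "\<And>X. X \<in> B \<Longrightarrow> X \<subseteq> C \<Longrightarrow> \<epsilon> < \<nu> X \<Longrightarrow>
      split X \<in> B \<and> \<epsilon> < \<nu> (X \<inter> split X) \<and> \<epsilon> < \<nu> (X - split X)"
    by metis
  define X where "X n = ((\<lambda>X. X - split X) ^^ n) C" for n
  have X_Suc: "X (Suc n) = X n - split (X n)" for n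
    by (simp add: X_def)
  have X: "X n \<in> B \<and> X n \<subseteq> C \<and> \<epsilon> < \<nu> (X n)" for n
  proof (induction n)
    case (Suc n)
    then show ?case using split[of "X n"] by (auto simp: X_Suc)
  qed (simp add: X_def C)
  define D where "D n = X n \<inter> split (X n)" for n
  have "range D \<subseteq> B"
    using X split by (auto simp: D_def)
  moreover have "D m \<inter> D n = {}" if "m < n" for m n
  proof -
    have "decseq X"
      by (intro decseq_SucI) (auto simp: X_Suc)
    then have "X n \<subseteq> X (Suc m)"
      using that by (simp add: decseq_def)
    then show ?thesis by (auto simp: D_def X_Suc)
  qed
  then have "disjoint_family D"
    unfolding disjoint_family_on_def by (metis Int_commute linorder_neqE_nat)
  ultimately obtain n where "\<nu> (D n) < \<epsilon>"
    using disjoint_family_nu_small \<open>0 < \<epsilon>\<close> by blast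
  then show False
    using X split[of "X n"] by (auto simp: D_def)
qed

definition atom_filter :: "ennreal \<Rightarrow> 'a set \<Rightarrow> 'a set \<Rightarrow> bool" where
  "atom_filter \<epsilon> A C \<longleftrightarrow> C \<in> B \<and> \<epsilon> < \<nu> (A \<inter> C)"

lemma two_valued_atom_filter:
  assumes A: "atom \<epsilon> A"
  shows "two_valued B (atom_filter \<epsilon> A)"
proof
  have "A \<in> B" using A by (simp add: atom_def)
  show "\<not> atom_filter \<epsilon> A {}"
    by (simp add: atom_filter_def nu_empty)
  show "atom_filter \<epsilon> A D" if "D \<in> B" "C \<subseteq> D" "atom_filter \<epsilon> A C" for C D
  proof -
    have "\<nu> (A \<inter> C) \<le> \<nu> (A \<inter> D)"
      using that \<open>A \<in> B\<close> by (intro nu_mono) (auto simp: atom_filter_def)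
    then show ?thesis using that by (auto simp: atom_filter_def)
  qed
  show "\<not> atom_filter \<epsilon> A D" if "C \<inter> D = {}" "atom_filter \<epsilon> A C" for C D
  proof
    assume D: "atom_filter \<epsilon> A D"
    have "\<nu> (A \<inter> C) \<le> \<nu> (A - D)"
      using that D \<open>A \<in> B\<close> by (intro nu_mono) (auto simp: atom_filter_def)
    then show False
      using A that D by (auto simp: atom_def atom_filter_def dest!: bspec[of _ _ D])
  qed
  show "\<exists>n. atom_filter \<epsilon> A (Cs n)"
    if "range Cs \<subseteq> B" "atom_filter \<epsilon> A (\<Union>n. Cs n)" for Cs :: "nat \<Rightarrow> 'a set"
  proof (rule ccontr)
    assume "\<nexists>n. atom_filter \<epsilon> A (Cs n)"
    then have "\<not> \<epsilon> < \<nu> (A \<inter> Cs n)" for n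
      using that(1) by (auto simp: atom_filter_def)
    moreover have "\<nu> (\<Union>n. A \<inter> Cs n) = (SUP n. \<nu> (A \<inter> Cs n))"
      using that(1) \<open>A \<in> B\<close> by (intro nu_UN) auto
    ultimately show False
      using that(2) by (auto simp: atom_filter_def less_SUP_iff)
  qed
qed

lemma atom_filter_overlapping:
  assumes "atom \<epsilon> A" "A' \<in> B" "\<epsilon> < \<nu> (A \<inter> A')" "atom_filter \<epsilon> A C"
  shows "atom_filter \<epsilon> A' C"
proof -
  have "A \<in> B" "C \<in> B" "\<nu> (A - A') \<le> \<epsilon>"
    using assms by (auto simp: atom_def atom_filter_def)
  have "\<nu> (A \<inter> C) \<le> \<nu> ((A' \<inter> C) \<union> (A - A'))"
    using \<open>A \<in> B\<close> \<open>C \<in> B\<close> \<open>A' \<in> B\<close> by (intro nu_mono) auto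
  also have "\<dots> = max (\<nu> (A' \<inter> C)) (\<nu> (A - A'))"
    using \<open>A \<in> B\<close> \<open>C \<in> B\<close> \<open>A' \<in> B\<close> by (intro nu_Un) auto
  finally show ?thesis
    using assms(4) \<open>C \<in> B\<close> \<open>\<nu> (A - A') \<le> \<epsilon>\<close>
    by (auto simp: atom_filter_def max_def split: if_splits)
qed

lemma atom_filter_eq:
  assumes "atom \<epsilon> A" "atom \<epsilon> A'" "\<epsilon> < \<nu> (A \<inter> A')"
  shows "atom_filter \<epsilon> A = atom_filter \<epsilon> A'"
proof -
  have "A \<in> B" "A' \<in> B" using assms by (simp_all add: atom_def)
  then show ?thesis
    using assms atom_filter_overlapping[of \<epsilon> A A'] atom_filter_overlapping[of \<epsilon> A' A]
    by (auto simp: Int_commute)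
qed

lemma finite_atom_filters:
  assumes "0 < \<epsilon>"
  shows "finite {atom_filter \<epsilon> A | A. atom \<epsilon> A}"
proof (rule ccontr)
  assume "infinite {atom_filter \<epsilon> A | A. atom \<epsilon> A}"
  then obtain f :: "nat \<Rightarrow> 'a set \<Rightarrow> bool"
    where f: "inj f" "range f \<subseteq> {atom_filter \<epsilon> A | A. atom \<epsilon> A}"
    using infinite_countable_subset by blast
  then have "\<forall>i. \<exists>A. atom \<epsilon> A \<and> f i = atom_filter \<epsilon> A"
    by blast
  then obtain A where A: "\<And>i. atom \<epsilon> (A i)" "\<And>i. f i = atom_filter \<epsilon> (A i)"
    by metis
  have "\<nu> (A i \<inter> A j) \<le> \<epsilon>" if "i \<noteq> j" for i j
  proof (rule ccontr)
    assume "\<not> \<nu> (A i \<inter> A j) \<le> \<epsilon>"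
    then have "f i = f j"
      using A atom_filter_eq[of \<epsilon> "A i" "A j"] by (simp add: not_le)
    then show False using injD[OF \<open>inj f\<close>] that by blast
  qed
  moreover have "range A \<subseteq> B"
    using A(1) by (auto simp: atom_def)
  ultimately obtain i where "\<nu> (A i) \<le> \<epsilon>"
    using almost_disjoint_nu_small \<open>0 < \<epsilon>\<close> by blast
  then show False using A(1)[of i] leD unfolding atom_def by blast
qed

(* The constant False is added only to make the family nonempty, so that it can be enumerated. *)
lemma exists_two_valued_detection: "\<exists>P. two_valued_detection E B \<nu> P"
proof -
  define F where "F = insert (\<lambda>_. False)
    (\<Union>r\<in>{r::rat. 0 < r}. {atom_filter (ennreal (of_rat r)) A | A. atom (ennreal (of_rat r)) A})"
  define P where "P = from_nat_into F"
  have "countable F"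
    unfolding F_def
    by (intro countable_insert Countable_Set.countable_UN[OF countableI_type]
        countable_finite[OF finite_atom_filters]) simp
  then have range_P: "range P = F"
    by (simp add: P_def F_def)
  have "two_valued B p" if "p \<in> F" for p
  proof -
    have "two_valued B (\<lambda>_. False)"
      by (simp add: two_valued_def)
    then show ?thesis
      using that two_valued_atom_filter unfolding F_def by blast
  qed
  moreover have "0 < \<nu> C \<longleftrightarrow> (\<exists>p\<in>F. p C)" if "C \<in> B" for C
  proof
    assume "0 < \<nu> C"
    then obtain r :: rat where r: "0 < ennreal (of_rat r)" "ennreal (of_rat r) < \<nu> C"
      using ennreal_rat_dense by blast
    then obtain A where A: "A \<subseteq> C" "atom (ennreal (of_rat r)) A"
      using exists_atom \<open>C \<in> B\<close> by blast
    then have "atom_filter (ennreal (of_rat r)) A C"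
      using \<open>C \<in> B\<close> by (simp add: atom_filter_def atom_def Int_absorb2)
    moreover have "atom_filter (ennreal (of_rat r)) A \<in> F"
      using r(1) A(2) unfolding F_def by auto
    ultimately show "\<exists>p\<in>F. p C" by blast
  next
    assume "\<exists>p\<in>F. p C"
    then obtain \<epsilon> A where A: "atom \<epsilon> A" "atom_filter \<epsilon> A C"
      unfolding F_def by blast
    then have "\<nu> (A \<inter> C) \<le> \<nu> C"
      using \<open>C \<in> B\<close> by (intro nu_mono) (auto simp: atom_def)
    then show "0 < \<nu> C"
      using A(2) unfolding atom_filter_def by (metis le_less_trans zero_le order.strict_trans2)
  qed
  ultimately have "two_valued_detection E B \<nu> P"
    by (intro two_valued_detection.intro[OF sigma_algebra_axioms] two_valued_detection_axioms.intro)
      (auto simp flip: range_P)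
  then show ?thesis by blast
qed

lemma sigma_ideal_sublevel: "sigma_ideal B {C \<in> B. \<nu> C \<le> c}"
proof -
  have "(\<Union>n. F n) \<in> B \<and> \<nu> (\<Union>n. F n) \<le> c" if "range F \<subseteq> {C \<in> B. \<nu> C \<le> c}"
    for F :: "nat \<Rightarrow> 'a set"
  proof -
    have F: "F n \<in> B" "\<nu> (F n) \<le> c" for n
      using that by auto
    then have "\<nu> (\<Union>n. F n) = (SUP n. \<nu> (F n))"
      by (intro nu_UN) auto
    then show ?thesis
      using F by (simp add: countable_nat_UN[of F] image_subset_iff SUP_le_iff)
  qed
  moreover have "\<nu> T \<le> c" if "S \<in> B" "\<nu> S \<le> c" "T \<in> B" "T \<subseteq> S" for S T
    using that nu_mono[of T S] by simp
  moreover have "{} \<in> {C \<in> B. \<nu> C \<le> c}"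
    using nu_empty by simp
  ultimately show ?thesis
    unfolding sigma_ideal_def by blast
qed

lemma sublevel_separator:
  assumes "sigma_principal B \<nu>"
  shows "\<exists>G\<in>B. \<forall>C\<in>B. \<nu> (C \<inter> G) = 0 \<longleftrightarrow> \<nu> C \<le> c"
proof -
  obtain L where L: "L \<in> B" "\<nu> L \<le> c" "\<And>S. S \<in> B \<Longrightarrow> \<nu> S \<le> c \<Longrightarrow> negligible B \<nu> (S - L)"
    using assms sigma_ideal_sublevel[of c] unfolding sigma_principal_def by blast
  have "\<nu> (C \<inter> (E - L)) = 0 \<longleftrightarrow> \<nu> C \<le> c" if "C \<in> B" for C
  proof
    assume "\<nu> (C \<inter> (E - L)) = 0"
    moreover have "(C \<inter> L) \<union> (C \<inter> (E - L)) = C"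
      using sets_into_space that by blast
    then have "\<nu> C = max (\<nu> (C \<inter> L)) (\<nu> (C \<inter> (E - L)))"
      using that L(1) nu_Un[of "C \<inter> L" "C \<inter> (E - L)"] by (simp add: Int Diff)
    moreover have "\<nu> (C \<inter> L) \<le> c"
      using that L(1,2) nu_mono[of "C \<inter> L" L] by (blast intro: order.trans)
    ultimately show "\<nu> C \<le> c" by simp
  next
    assume "\<nu> C \<le> c"
    then have "negligible B \<nu> (C - L)"
      using L(3) that by blast
    moreover have "C - L = C \<inter> (E - L)"
      using sets_into_space that by blast
    moreover have "C \<inter> (E - L) \<in> B"
      using that L(1) by blast
    ultimately show "\<nu> (C \<inter> (E - L)) = 0"
      using negligible_iff by simp
  qed
  then show ?thesis using L(1) by blast
qed

lemma autocontinuous_if_separators: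
  fixes G :: "rat \<Rightarrow> 'a set"
  assumes G_sets: "\<And>r. G r \<in> B"
    and G_null: "\<And>r C. C \<in> B \<Longrightarrow> \<nu> (C \<inter> G r) = 0 \<longleftrightarrow> \<nu> C \<le> ennreal (of_rat r)"
  shows "autocontinuous E B \<nu>"
proof -
  define f where "f x = (SUP r\<in>{r. x \<in> G r}. ennreal (of_rat r))" for x
  have level: "{x \<in> E. t < f x} = (\<Union>r\<in>{r. t < ennreal (of_rat r)}. G r)" for t
    using G_sets sets_into_space by (auto simp: f_def less_SUP_iff)
  have level_sets: "{x \<in> E. t < f x} \<in> B" for t
    unfolding level using G_sets by (intro countable_UN'') auto
  have null_level: "\<nu> (C \<inter> {x \<in> E. t < f x}) = 0 \<longleftrightarrow> \<nu> C \<le> t" if "C \<in> B" for C t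
  proof -
    have "\<nu> (C \<inter> {x \<in> E. t < f x}) = (SUP r\<in>{r. t < ennreal (of_rat r)}. \<nu> (C \<inter> G r))"
      unfolding level Int_UN_distrib using that G_sets by (intro nu_UN) auto
    then show ?thesis
      using G_null[OF that] ennreal_le_iff_rat_upper_bounds[of "\<nu> C" t]
      by (simp add: SUP_bot_conv(1)[where 'a=ennreal, unfolded bot_ennreal])
  qed
  have "\<nu> C = Inf {t. 0 < t \<and> negligible B \<nu> (C \<inter> {x \<in> E. t < f x})}" if "C \<in> B" for C
  proof -
    have "C \<inter> {x \<in> E. t < f x} \<in> B" for t
      using that level_sets by blast
    then have "negligible B \<nu> (C \<inter> {x \<in> E. t < f x}) \<longleftrightarrow> \<nu> C \<le> t" for t
      using negligible_iff null_level[OF that] by simp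
    then show ?thesis
      using Inf_positive_upper_bounds[of "\<nu> C"] by simp
  qed
  then show ?thesis
    unfolding autocontinuous_def using level_sets by blast
qed

lemma autocontinuous_if_sigma_principal:
  assumes "sigma_principal B \<nu>"
  shows "autocontinuous E B \<nu>"
proof -
  have "\<forall>r::rat. \<exists>G. G \<in> B \<and> (\<forall>C\<in>B. \<nu> (C \<inter> G) = 0 \<longleftrightarrow> \<nu> C \<le> ennreal (of_rat r))"
    using sublevel_separator[OF assms] by blast
  then have "\<exists>G. \<forall>r::rat. G r \<in> B \<and> (\<forall>C\<in>B. \<nu> (C \<inter> G r) = 0 \<longleftrightarrow> \<nu> C \<le> ennreal (of_rat r))"
    by (rule choice)
  then show ?thesis
    using autocontinuous_if_separators by blast
qed

end

theorem proposition6p6: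
  fixes E :: "'a set" and B :: "'a set set" and \<nu> :: "'a set \<Rightarrow> ennreal"
  assumes "E \<noteq> {}" and "sigma_algebra E B" and "optimal_measure E B \<nu>"
  shows "essential E B \<nu> \<and> sigma_principal B \<nu> \<and> CCC B \<nu> \<and> autocontinuous E B \<nu>"
proof -
  interpret optimal_measure_space E B \<nu>
    using assms(2,3) by (intro optimal_measure_space.intro optimal_measure_space_axioms.intro)
  obtain P where "two_valued_detection E B \<nu> P"
    using exists_two_valued_detection by blast
  then interpret two_valued_detection E B \<nu> P .
  show ?thesis
    using essential sigma_principal CCC autocontinuous_if_sigma_principal by blast
qed

end
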